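(* Let $\sigma>\sqrt{2}/3$ and define $F(x)=-x^3-3\sigma^2x$ and $G(x)=\sqrt{15\sigma^6+36\sigma^4x^2+9\sigma^2x^4}$. Fix any timestep $\Delta t>0$ and let $$P(\xi\mid x)=\frac{1}{G(x)\sqrt{2\pi\Delta t}}\exp\!\left(\frac{-[\xi-x-F(x)\Delta t]^2}{2G(x)^2\Delta t}\right).$$ Then there is no probability density $\rho^*$ on $\mathbb{R}$ satisfying $\rho^*(\xi)=\int_{-\infty}^{\infty}P(\xi\mid x)\rho^*(x)\,dx$ for all $\xi$ and having finite second raw moment $\int_{-\infty}^{\infty}x^2\rho^*(x)\,dx<\infty$. That is, every such equilibrium density has divergent second moment.
   Context: The functions $F,G$ are the drift and diffusion coefficients of the Itô SDE $dx=(-x^3-3\sigma^2x)\,dt+\sqrt{15\sigma^6+36\sigma^4x^2+9\sigma^2x^4}\,dW$ with noise parameter $\sigma>0$. $P(\xi\mid x)$ is the one-step transition density of its Euler–Maruyama discretization $\xi=x+F(x)\Delta t+G(x)\eta\sqrt{\Delta t}$, $\eta\sim N(0,1)$; an equilibrium is a probability density invariant under this step. *)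

theory Defs
  imports "HOL-Analysis.Analysis"
begin

definition drift :: "real \<Rightarrow> real \<Rightarrow> real" where
  "drift \<sigma> x = -(x ^ 3) - 3 * \<sigma>\<^sup>2 * x"

definition diffusion :: "real \<Rightarrow> real \<Rightarrow> real" where
  "diffusion \<sigma> x = sqrt (15 * \<sigma> ^ 6 + 36 * \<sigma> ^ 4 * x\<^sup>2 + 9 * \<sigma>\<^sup>2 * x ^ 4)"

definition trans_density :: "real \<Rightarrow> real \<Rightarrow> real \<Rightarrow> real \<Rightarrow> real" where
  "trans_density \<sigma> dt \<xi> x =
     1 / (diffusion \<sigma> x * sqrt (2 * pi * dt)) *
     exp (- (\<xi> - x - drift \<sigma> x * dt)\<^sup>2 / (2 * (diffusion \<sigma> x)\<^sup>2 * dt))"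

definition prob_density :: "(real \<Rightarrow> real) \<Rightarrow> bool" where
  "prob_density \<rho> \<longleftrightarrow> (\<forall>x. 0 \<le> \<rho> x) \<and> integrable lborel \<rho> \<and> (\<integral>x. \<rho> x \<partial>lborel) = 1"

text \<open>Invariance under the Euler--Maruyama step, pointwise for every xi.
  The integrand is nonnegative, so the (extended) nonnegative integral is used.\<close>
definition em_equilibrium :: "real \<Rightarrow> real \<Rightarrow> (real \<Rightarrow> real) \<Rightarrow> bool" where
  "em_equilibrium \<sigma> dt \<rho> \<longleftrightarrow> prob_density \<rho> \<and>
     (\<forall>\<xi>. ennreal (\<rho> \<xi>) = (\<integral>\<^sup>+ x. ennreal (trans_density \<sigma> dt \<xi> x * \<rho> x) \<partial>lborel))"

end

theory Submission
  imports Defs "HOL-Probability.Probability"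
begin

text \<open>The mean square is a Lyapunov function with constant gain: one Euler--Maruyama step
  raises the expected value of \<open>x\<^sup>2\<close> from every starting point \<open>x\<close> by at least
  \<open>15 \<sigma>\<^sup>6 \<Delta>t\<close>, because for \<open>\<sigma> > \<surd>2/3\<close> the multiplicative noise \<open>G(x)\<^sup>2 \<Delta>t\<close> outweighs the
  inward pull of the cubic drift. Integrating against an equilibrium density and using
  invariance (Tonelli) gives \<open>m \<ge> m + 15 \<sigma>\<^sup>6 \<Delta>t\<close> for its second moment \<open>m\<close>, so \<open>m = \<infinity>\<close>.\<close>

lemma nn_integral_invariant_density:
  fixes k :: "'a \<Rightarrow> 'a \<Rightarrow> ennreal"
  assumes "sigma_finite_measure M"
    and [measurable]: "(\<lambda>(y, x). k y x) \<in> borel_measurable (M \<Otimes>\<^sub>M M)"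
      "\<rho> \<in> borel_measurable M" "f \<in> borel_measurable M"
    and invariant: "\<And>y. y \<in> space M \<Longrightarrow> \<rho> y = (\<integral>\<^sup>+x. k y x * \<rho> x \<partial>M)"
  shows "(\<integral>\<^sup>+y. f y * \<rho> y \<partial>M) = (\<integral>\<^sup>+x. (\<integral>\<^sup>+y. f y * k y x \<partial>M) * \<rho> x \<partial>M)"
proof -
  interpret pair_sigma_finite M M
    using assms(1) by (simp add: pair_sigma_finite_def)
  have "(\<integral>\<^sup>+y. f y * \<rho> y \<partial>M) = (\<integral>\<^sup>+y. (\<integral>\<^sup>+x. f y * k y x * \<rho> x \<partial>M) \<partial>M)"
    by (intro nn_integral_cong) (simp add: invariant nn_integral_cmult[symmetric] mult.assoc)
  also have "\<dots> = (\<integral>\<^sup>+x. (\<integral>\<^sup>+y. f y * k y x * \<rho> x \<partial>M) \<partial>M)"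
    by (rule Fubini') measurable
  also have "\<dots> = (\<integral>\<^sup>+x. (\<integral>\<^sup>+y. f y * k y x \<partial>M) * \<rho> x \<partial>M)"
    by (intro nn_integral_cong nn_integral_multc) measurable
  finally show ?thesis .
qed

lemma invariant_density_moment_infinite:
  fixes k :: "'a \<Rightarrow> 'a \<Rightarrow> ennreal"
  assumes "sigma_finite_measure M"
    and "(\<lambda>(y, x). k y x) \<in> borel_measurable (M \<Otimes>\<^sub>M M)"
    and meas: "\<rho> \<in> borel_measurable M" "f \<in> borel_measurable M"
    and "\<And>y. y \<in> space M \<Longrightarrow> \<rho> y = (\<integral>\<^sup>+x. k y x * \<rho> x \<partial>M)"
    and gain: "\<And>x. x \<in> space M \<Longrightarrow> f x + c \<le> (\<integral>\<^sup>+y. f y * k y x \<partial>M)"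
    and "c > 0" and mass: "(\<integral>\<^sup>+x. \<rho> x \<partial>M) \<noteq> 0"
  shows "(\<integral>\<^sup>+y. f y * \<rho> y \<partial>M) = \<infinity>"
proof (rule ccontr)
  define m where "m = (\<integral>\<^sup>+y. f y * \<rho> y \<partial>M)"
  assume "m \<noteq> \<infinity>"
  have "m + c * (\<integral>\<^sup>+x. \<rho> x \<partial>M) = (\<integral>\<^sup>+x. (f x + c) * \<rho> x \<partial>M)"
    unfolding m_def using meas
    by (simp add: distrib_right nn_integral_add nn_integral_cmult)
  also have "\<dots> \<le> (\<integral>\<^sup>+x. (\<integral>\<^sup>+y. f y * k y x \<partial>M) * \<rho> x \<partial>M)"
    by (intro nn_integral_mono mult_right_mono gain) auto
  also have "\<dots> = m"
    unfolding m_def by (rule nn_integral_invariant_density[symmetric]) (fact assms)+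
  finally have "c * (\<integral>\<^sup>+x. \<rho> x \<partial>M) = 0"
    using \<open>m \<noteq> \<infinity>\<close> by simp
  then show False
    using \<open>c > 0\<close> mass by simp
qed

lemma normal_density_second_moment:
  assumes "s > 0"
  shows "has_bochner_integral lborel (\<lambda>\<xi>. normal_density \<mu> s \<xi> * \<xi>\<^sup>2) (s\<^sup>2 + \<mu>\<^sup>2)"
proof -
  have centered: "has_bochner_integral lborel (\<lambda>\<xi>. normal_density \<mu> s \<xi> * (\<xi> - \<mu>)\<^sup>2) (s\<^sup>2)"
    using normal_moment_even[OF assms, of \<mu> 1] by (simp add: power2_eq_square)
  have first: "has_bochner_integral lborel (\<lambda>\<xi>. 2 * \<mu> * (normal_density \<mu> s \<xi> * \<xi>)) (2 * \<mu> * \<mu>)"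
    by (intro has_bochner_integral_mult_right normal_moment_nz_1[OF assms])
  have total: "has_bochner_integral lborel (\<lambda>\<xi>. \<mu>\<^sup>2 * normal_density \<mu> s \<xi>) (\<mu>\<^sup>2 * 1)"
    by (intro has_bochner_integral_mult_right) (simp add: has_bochner_integral_iff assms)
  have "has_bochner_integral lborel
      (\<lambda>\<xi>. normal_density \<mu> s \<xi> * (\<xi> - \<mu>)\<^sup>2 + 2 * \<mu> * (normal_density \<mu> s \<xi> * \<xi>) - \<mu>\<^sup>2 * normal_density \<mu> s \<xi>)
      (s\<^sup>2 + 2 * \<mu> * \<mu> - \<mu>\<^sup>2 * 1)"
    by (intro has_bochner_integral_diff has_bochner_integral_add centered first total)
  then show ?thesis
    by (simp add: power2_eq_square algebra_simps)
qed

lemma diffusion_pos: "\<sigma> \<noteq> 0 \<Longrightarrow> 0 < diffusion \<sigma> x"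
  unfolding diffusion_def by (intro real_sqrt_gt_zero add_pos_nonneg) auto

lemma trans_density_eq_normal_density:
  assumes "\<sigma> \<noteq> 0" "dt > 0"
  shows "trans_density \<sigma> dt \<xi> x = normal_density (x + drift \<sigma> x * dt) (diffusion \<sigma> x * sqrt dt) \<xi>"
proof -
  have "sqrt (2 * pi * (diffusion \<sigma> x * sqrt dt)\<^sup>2) = diffusion \<sigma> x * sqrt (2 * pi * dt)"
    using diffusion_pos[OF assms(1), of x] assms(2) by (simp add: power_mult_distrib real_sqrt_mult)
  moreover have "(\<xi> - x - drift \<sigma> x * dt)\<^sup>2 = (\<xi> - (x + drift \<sigma> x * dt))\<^sup>2"
    by (simp add: algebra_simps)
  ultimately show ?thesis
    unfolding trans_density_def normal_density_def using assms(2)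
    by (simp add: power_mult_distrib mult_ac)
qed

lemma nn_integral_sq_trans_density:
  assumes "\<sigma> \<noteq> 0" "dt > 0"
  shows "(\<integral>\<^sup>+\<xi>. ennreal (\<xi>\<^sup>2) * ennreal (trans_density \<sigma> dt \<xi> x) \<partial>lborel)
    = ennreal ((diffusion \<sigma> x)\<^sup>2 * dt + (x + drift \<sigma> x * dt)\<^sup>2)"
proof -
  have "diffusion \<sigma> x * sqrt dt > 0"
    using diffusion_pos[OF assms(1)] assms(2) by simp
  from normal_density_second_moment[OF this, of "x + drift \<sigma> x * dt"] assms(2)
  show ?thesis
    by (simp add: trans_density_eq_normal_density[OF assms] ennreal_mult'[symmetric] mult.commute
        power_mult_distrib nn_integral_eq_integral has_bochner_integral_iff)
qed

text \<open>The two sides differ by \<open>\<Delta>t ((9\<sigma>\<^sup>2 - 2) x\<^sup>4 + 6\<sigma>\<^sup>2 (6\<sigma>\<^sup>2 - 1) x\<^sup>2) + (F(x) \<Delta>t)\<^sup>2\<close>;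
  the quartic coefficient is where the threshold \<open>\<sigma> > \<surd>2/3\<close> comes from.\<close>
lemma em_step_mean_square_ge:
  assumes "dt \<ge> 0" "2 \<le> 9 * \<sigma>\<^sup>2"
  shows "x\<^sup>2 + 15 * \<sigma> ^ 6 * dt \<le> (diffusion \<sigma> x)\<^sup>2 * dt + (x + drift \<sigma> x * dt)\<^sup>2"
proof -
  have "(diffusion \<sigma> x)\<^sup>2 = 15 * \<sigma> ^ 6 + 36 * \<sigma> ^ 4 * x\<^sup>2 + 9 * \<sigma>\<^sup>2 * x ^ 4"
    unfolding diffusion_def by (intro real_sqrt_pow2) auto
  then have "(diffusion \<sigma> x)\<^sup>2 * dt + (x + drift \<sigma> x * dt)\<^sup>2 - (x\<^sup>2 + 15 * \<sigma> ^ 6 * dt)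
      = dt * ((9 * \<sigma>\<^sup>2 - 2) * x ^ 4 + 6 * \<sigma>\<^sup>2 * (6 * \<sigma>\<^sup>2 - 1) * x\<^sup>2) + (drift \<sigma> x * dt)\<^sup>2"
    by (simp add: drift_def algebra_simps power2_eq_square power4_eq_xxxx power3_eq_cube)
  moreover have "0 \<le> dt * ((9 * \<sigma>\<^sup>2 - 2) * x ^ 4 + 6 * \<sigma>\<^sup>2 * (6 * \<sigma>\<^sup>2 - 1) * x\<^sup>2) + (drift \<sigma> x * dt)\<^sup>2"
    using assms by (intro add_nonneg_nonneg mult_nonneg_nonneg) auto
  ultimately show ?thesis
    by linarith
qed

lemma em_step_mean_square_gain:
  assumes "2 \<le> 9 * \<sigma>\<^sup>2" "dt > 0"
  shows "ennreal (x\<^sup>2) + ennreal (15 * \<sigma> ^ 6 * dt)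
    \<le> (\<integral>\<^sup>+\<xi>. ennreal (\<xi>\<^sup>2) * ennreal (trans_density \<sigma> dt \<xi> x) \<partial>lborel)"
proof -
  have "\<sigma> \<noteq> 0"
    using assms(1) by auto
  with em_step_mean_square_ge[of dt \<sigma> x] assms show ?thesis
    by (simp add: nn_integral_sq_trans_density ennreal_plus[symmetric] del: ennreal_plus)
qed

lemma borel_measurable_trans_density:
  "(\<lambda>(\<xi>, x). ennreal (trans_density \<sigma> dt \<xi> x)) \<in> borel_measurable (lborel \<Otimes>\<^sub>M lborel)"
  unfolding trans_density_def drift_def diffusion_def by measurable

lemma em_equilibriumD:
  assumes "em_equilibrium \<sigma> dt \<rho>"
  shows "\<rho> \<in> borel_measurable lborel" and "\<And>x. 0 \<le> \<rho> x"
    and "(\<integral>\<^sup>+x. ennreal (\<rho> x) \<partial>lborel) = 1"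
    and "\<And>\<xi>. ennreal (\<rho> \<xi>) = (\<integral>\<^sup>+x. ennreal (trans_density \<sigma> dt \<xi> x) * ennreal (\<rho> x) \<partial>lborel)"
proof -
  have nonneg: "\<And>x. 0 \<le> \<rho> x" and density: "integrable lborel \<rho>" "(\<integral>x. \<rho> x \<partial>lborel) = 1"
    and invariant: "\<And>\<xi>. ennreal (\<rho> \<xi>) = (\<integral>\<^sup>+x. ennreal (trans_density \<sigma> dt \<xi> x * \<rho> x) \<partial>lborel)"
    using assms unfolding em_equilibrium_def prob_density_def by auto
  from nonneg density show "\<rho> \<in> borel_measurable lborel" "\<And>x. 0 \<le> \<rho> x"
    "(\<integral>\<^sup>+x. ennreal (\<rho> x) \<partial>lborel) = 1"
    by (auto simp: nn_integral_eq_integral)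
  show "ennreal (\<rho> \<xi>) = (\<integral>\<^sup>+x. ennreal (trans_density \<sigma> dt \<xi> x) * ennreal (\<rho> x) \<partial>lborel)" for \<xi>
    unfolding invariant[of \<xi>] by (simp add: nonneg ennreal_mult'')
qed

theorem mainTheorem2:
  fixes \<sigma> dt :: real
  assumes "\<sigma> > sqrt 2 / 3" and "dt > 0"
  shows "\<not> (\<exists>\<rho>. em_equilibrium \<sigma> dt \<rho> \<and> integrable lborel (\<lambda>x. x\<^sup>2 * \<rho> x))"
proof
  assume "\<exists>\<rho>. em_equilibrium \<sigma> dt \<rho> \<and> integrable lborel (\<lambda>x. x\<^sup>2 * \<rho> x)"
  then obtain \<rho> where equilibrium: "em_equilibrium \<sigma> dt \<rho>"
    and moment: "integrable lborel (\<lambda>x. x\<^sup>2 * \<rho> x)"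
    by blast
  have "0 < \<sigma>"
    by (rule le_less_trans[OF _ assms(1)]) simp
  have "(sqrt 2)\<^sup>2 < (3 * \<sigma>)\<^sup>2"
    using assms(1) by (intro power_strict_mono) simp_all
  then have "2 < 9 * \<sigma>\<^sup>2"
    by (simp add: power_mult_distrib)
  have "(\<integral>\<^sup>+x. ennreal (x\<^sup>2) * ennreal (\<rho> x) \<partial>lborel) = \<infinity>"
    by (rule invariant_density_moment_infinite[OF lborel.sigma_finite_measure_axioms
          borel_measurable_trans_density _ _ em_equilibriumD(4)[OF equilibrium] em_step_mean_square_gain])
      (use em_equilibriumD(1,3)[OF equilibrium] \<open>2 < 9 * \<sigma>\<^sup>2\<close> \<open>0 < \<sigma>\<close> assms(2) in auto)
  moreover have "(\<integral>\<^sup>+x. ennreal (x\<^sup>2) * ennreal (\<rho> x) \<partial>lborel) < \<infinity>"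
    using moment em_equilibriumD(2)[OF equilibrium]
    by (simp add: ennreal_mult'[symmetric] nn_integral_eq_integral)
  ultimately show False
    by simp
qed

end
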